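(* Let $G=(V,E)$ be a finite graph, and let $W,\widehat W$ be maps assigning nonnegative weights to connected subgraphs of $G$, such that for every connected subgraph $C$: $\widehat W(C)=0$ if $W(C)=0$, and $0<\widehat W(C)<W(C)$ if $W(C)>0$. Put $W_{\rm red}=\widehat W$, $W_{\rm blue}=W-\widehat W$, and let $\mu_{G,\mathbf W}$ be the joint measure on pairs $(A,\boldsymbol\sigma)$, $A\subseteq E$, $\boldsymbol\sigma\in\{\mathrm{red},\mathrm{blue}\}^V$, $$\mu_{G,\mathbf W}(A,\boldsymbol\sigma)\propto\Delta(A,\boldsymbol\sigma)\prod_{C\in K(A)}W_{\sigma(C)}(C).$$ Suppose that for each $\boldsymbol\sigma$ with $(A,\boldsymbol\sigma)\in\mathrm{supp}(\mu_{G,\mathbf W})$ for some $A$, $P_{G_{\rm red}(\boldsymbol\sigma),\widehat W}$ is a transition matrix on $\{A_{\rm red}\subseteq E(G_{\rm red}(\boldsymbol\sigma))\}$ with stationary distribution $\phi_{G_{\rm red}(\boldsymbol\sigma),\widehat W}$, and that $P_{G,\widehat W}$ (the case where all vertices are red) is ergodic on $\mathrm{supp}(\phi_{G,\widehat W})$. Define transition matrices on $\mathrm{supp}(\mu_{G,\mathbf W})$ by $$P_{\rm colour}[(A,\boldsymbol\sigma)\to(A',\boldsymbol\sigma')]=\delta_{A,A'}\,\Delta(A,\boldsymbol\sigma')\prod_{C\in K(A)}\frac{W_{\sigma'(C)}(C)}{W(C)},$$ $$P_{\rm bond}[(A,\boldsymbol\sigma)\to(A',\boldsymbol\sigma')]=\delta_{\boldsymbol\sigma,\boldsymbol\sigma'}\,\Delta(A',\boldsymbol\sigma)\,\delta_{A_{\rm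 blue},A'_{\rm blue}}\,P_{G_{\rm red}(\boldsymbol\sigma),\widehat W}[A_{\rm red}\to A'_{\rm red}].$$ Then $P:=P_{\rm colour}P_{\rm bond}$ is ergodic on $\mathrm{supp}(\mu_{G,\mathbf W})$ and has stationary distribution $\mu_{G,\mathbf W}$. (Consequently, since the marginal of $\mu_{G,\mathbf W}$ on $A$ is $\phi_{G,W}$, the $A$-component of this chain samples $\phi_{G,W}$.)
   Context: For a graph $H$ (a subgraph of $G$) and $A\subseteq E(H)$, $K(A)$ denotes the set of connected components of the spanning subgraph $(V(H),A)$, and $\phi_{H,W}(A)\propto\prod_{C\in K(A)}W(C)$ for $A\subseteq E(H)$. For $\boldsymbol\sigma\in\{\mathrm{red},\mathrm{blue}\}^V$, $\Delta(A,\boldsymbol\sigma)$ is the indicator that $\sigma_i=\sigma_j$ for every edge $ij\in A$; when $\Delta(A,\boldsymbol\sigma)=1$, $\sigma(C)$ denotes the common colour of the vertices of the component $C$. $G_{\rm red}(\boldsymbol\sigma)$ and $G_{\rm blue}(\boldsymbol\sigma)$ are the subgraphs of $G$ induced by the red and blue vertices respectively, $A_{\rm red}=A\cap E(G_{\rm red}(\boldsymbol\sigma))$ and $A_{\rm blue}=A\cap E(G_{\rm blue}(\boldsymbol\sigma))$. $\mathrm{supp}$ denotes the set of states of positive probability. "Ergodic" means irreducible. *)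

theory Defs
  imports Complex_Main "HOL-Library.FuncSet"
begin

text \<open>Graphs: vertex set V :: 'v set, edge set E :: 'e set, and ends :: 'e => 'v set
  giving the set of endpoints of each edge (one endpoint for a loop, two otherwise).
  A (sub)graph is represented as a pair (vertex set, edge set).\<close>

datatype colour = Red | Blue

definition finite_graph :: "'v set \<Rightarrow> 'e set \<Rightarrow> ('e \<Rightarrow> 'v set) \<Rightarrow> bool" where
  "finite_graph V E ends \<longleftrightarrow> finite V \<and> finite E \<and>
     (\<forall>e\<in>E. ends e \<subseteq> V \<and> 1 \<le> card (ends e) \<and> card (ends e) \<le> 2)"

definition adjrel :: "('e \<Rightarrow> 'v set) \<Rightarrow> 'e set \<Rightarrow> ('v \<times> 'v) set" where
  "adjrel ends A = {(x, y). \<exists>e\<in>A. x \<in> ends e \<and> y \<in> ends e}"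

definition connrel :: "('e \<Rightarrow> 'v set) \<Rightarrow> 'v set \<Rightarrow> 'e set \<Rightarrow> ('v \<times> 'v) set" where
  "connrel ends U A = {(x, y). x \<in> U \<and> y \<in> U \<and> (x, y) \<in> (adjrel ends A)\<^sup>*}"

definition comps :: "('e \<Rightarrow> 'v set) \<Rightarrow> 'v set \<Rightarrow> 'e set \<Rightarrow> ('v set \<times> 'e set) set" where
  "comps ends U A = (\<lambda>C. (C, {e\<in>A. ends e \<subseteq> C})) ` (U // connrel ends U A)"

definition conn_subgraph :: "'v set \<Rightarrow> 'e set \<Rightarrow> ('e \<Rightarrow> 'v set) \<Rightarrow> 'v set \<times> 'e set \<Rightarrow> bool" where
  "conn_subgraph V E ends C \<longleftrightarrow> fst C \<noteq> {} \<and> fst C \<subseteq> V \<and> snd C \<subseteq> E \<and>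
     (\<forall>e\<in>snd C. ends e \<subseteq> fst C) \<and>
     (\<forall>x\<in>fst C. \<forall>y\<in>fst C. (x, y) \<in> (adjrel ends (snd C))\<^sup>*)"

definition phi_w :: "('e \<Rightarrow> 'v set) \<Rightarrow> ('v set \<times> 'e set \<Rightarrow> real) \<Rightarrow> 'v set \<times> 'e set \<Rightarrow> 'e set \<Rightarrow> real" where
  "phi_w ends W H A = (\<Prod>C\<in>comps ends (fst H) A. W C)"

definition phi :: "('e \<Rightarrow> 'v set) \<Rightarrow> ('v set \<times> 'e set \<Rightarrow> real) \<Rightarrow> 'v set \<times> 'e set \<Rightarrow> 'e set \<Rightarrow> real" where
  "phi ends W H A = phi_w ends W H A / (\<Sum>B\<in>Pow (snd H). phi_w ends W H B)"

definition Delta :: "('e \<Rightarrow> 'v set) \<Rightarrow> 'e set \<Rightarrow> ('v \<Rightarrow> colour) \<Rightarrow> bool" where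
  "Delta ends A \<sigma> \<longleftrightarrow> (\<forall>e\<in>A. \<forall>x\<in>ends e. \<forall>y\<in>ends e. \<sigma> x = \<sigma> y)"

definition col_of :: "('v \<Rightarrow> colour) \<Rightarrow> 'v set \<times> 'e set \<Rightarrow> colour" where
  "col_of \<sigma> C = \<sigma> (SOME v. v \<in> fst C)"

definition Wc :: "('v set \<times> 'e set \<Rightarrow> real) \<Rightarrow> ('v set \<times> 'e set \<Rightarrow> real) \<Rightarrow> colour \<Rightarrow> 'v set \<times> 'e set \<Rightarrow> real" where
  "Wc W Wh c C = (case c of Red \<Rightarrow> Wh C | Blue \<Rightarrow> W C - Wh C)"

definition colourings :: "'v set \<Rightarrow> ('v \<Rightarrow> colour) set" where
  "colourings V = V \<rightarrow>\<^sub>E (UNIV :: colour set)"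

definition states :: "'v set \<Rightarrow> 'e set \<Rightarrow> ('e set \<times> ('v \<Rightarrow> colour)) set" where
  "states V E = Pow E \<times> colourings V"

definition mu_w :: "'v set \<Rightarrow> ('e \<Rightarrow> 'v set) \<Rightarrow> ('v set \<times> 'e set \<Rightarrow> real) \<Rightarrow> ('v set \<times> 'e set \<Rightarrow> real)
    \<Rightarrow> 'e set \<times> ('v \<Rightarrow> colour) \<Rightarrow> real" where
  "mu_w V ends W Wh x = (if Delta ends (fst x) (snd x)
      then (\<Prod>C\<in>comps ends V (fst x). Wc W Wh (col_of (snd x) C) C) else 0)"

definition mu :: "'v set \<Rightarrow> 'e set \<Rightarrow> ('e \<Rightarrow> 'v set) \<Rightarrow> ('v set \<times> 'e set \<Rightarrow> real) \<Rightarrow> ('v set \<times> 'e set \<Rightarrow> real)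
    \<Rightarrow> 'e set \<times> ('v \<Rightarrow> colour) \<Rightarrow> real" where
  "mu V E ends W Wh x = mu_w V ends W Wh x / (\<Sum>y\<in>states V E. mu_w V ends W Wh y)"

definition supp_mu :: "'v set \<Rightarrow> 'e set \<Rightarrow> ('e \<Rightarrow> 'v set) \<Rightarrow> ('v set \<times> 'e set \<Rightarrow> real) \<Rightarrow> ('v set \<times> 'e set \<Rightarrow> real)
    \<Rightarrow> ('e set \<times> ('v \<Rightarrow> colour)) set" where
  "supp_mu V E ends W Wh = {x \<in> states V E. mu V E ends W Wh x > 0}"

definition col_verts :: "'v set \<Rightarrow> ('v \<Rightarrow> colour) \<Rightarrow> colour \<Rightarrow> 'v set" where
  "col_verts V \<sigma> c = {v \<in> V. \<sigma> v = c}"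

definition induced :: "'e set \<Rightarrow> ('e \<Rightarrow> 'v set) \<Rightarrow> 'v set \<Rightarrow> 'v set \<times> 'e set" where
  "induced E ends U = (U, {e \<in> E. ends e \<subseteq> U})"

definition G_red :: "'v set \<Rightarrow> 'e set \<Rightarrow> ('e \<Rightarrow> 'v set) \<Rightarrow> ('v \<Rightarrow> colour) \<Rightarrow> 'v set \<times> 'e set" where
  "G_red V E ends \<sigma> = induced E ends (col_verts V \<sigma> Red)"

definition G_blue :: "'v set \<Rightarrow> 'e set \<Rightarrow> ('e \<Rightarrow> 'v set) \<Rightarrow> ('v \<Rightarrow> colour) \<Rightarrow> 'v set \<times> 'e set" where
  "G_blue V E ends \<sigma> = induced E ends (col_verts V \<sigma> Blue)"

definition transition_matrix :: "'s set \<Rightarrow> ('s \<Rightarrow> 's \<Rightarrow> real) \<Rightarrow> bool" where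
  "transition_matrix S P \<longleftrightarrow> (\<forall>x\<in>S. \<forall>y\<in>S. P x y \<ge> 0) \<and> (\<forall>x\<in>S. (\<Sum>y\<in>S. P x y) = 1)"

definition stationary :: "'s set \<Rightarrow> ('s \<Rightarrow> 's \<Rightarrow> real) \<Rightarrow> ('s \<Rightarrow> real) \<Rightarrow> bool" where
  "stationary S P p \<longleftrightarrow> (\<forall>y\<in>S. (\<Sum>x\<in>S. p x * P x y) = p y)"

text \<open>Ergodic (= irreducible) on S: every state of S reaches every state of S through
  positive-probability transitions between states of S.\<close>
definition irreducible_on :: "'s set \<Rightarrow> ('s \<Rightarrow> 's \<Rightarrow> real) \<Rightarrow> bool" where
  "irreducible_on S P \<longleftrightarrow>
     (\<forall>x\<in>S. \<forall>y\<in>S. (x, y) \<in> {(a, b). a \<in> S \<and> b \<in> S \<and> P a b > 0}\<^sup>*)"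

definition matmul :: "'s set \<Rightarrow> ('s \<Rightarrow> 's \<Rightarrow> real) \<Rightarrow> ('s \<Rightarrow> 's \<Rightarrow> real) \<Rightarrow> 's \<Rightarrow> 's \<Rightarrow> real" where
  "matmul S P Q x z = (\<Sum>y\<in>S. P x y * Q y z)"

definition P_colour :: "'v set \<Rightarrow> ('e \<Rightarrow> 'v set) \<Rightarrow> ('v set \<times> 'e set \<Rightarrow> real) \<Rightarrow> ('v set \<times> 'e set \<Rightarrow> real)
    \<Rightarrow> 'e set \<times> ('v \<Rightarrow> colour) \<Rightarrow> 'e set \<times> ('v \<Rightarrow> colour) \<Rightarrow> real" where
  "P_colour V ends W Wh x x' =
     (if fst x = fst x' \<and> Delta ends (fst x) (snd x')
      then (\<Prod>C\<in>comps ends V (fst x). Wc W Wh (col_of (snd x') C) C / W C) else 0)"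

definition P_bond :: "'v set \<Rightarrow> 'e set \<Rightarrow> ('e \<Rightarrow> 'v set) \<Rightarrow> ('v set \<times> 'e set \<Rightarrow> 'e set \<Rightarrow> 'e set \<Rightarrow> real)
    \<Rightarrow> 'e set \<times> ('v \<Rightarrow> colour) \<Rightarrow> 'e set \<times> ('v \<Rightarrow> colour) \<Rightarrow> real" where
  "P_bond V E ends Pm x x' =
     (let \<sigma> = snd x; A = fst x; A' = fst x'; Er = snd (G_red V E ends \<sigma>); Eb = snd (G_blue V E ends \<sigma>)
      in if \<sigma> = snd x' \<and> Delta ends A' \<sigma> \<and> A \<inter> Eb = A' \<inter> Eb
         then Pm (G_red V E ends \<sigma>) (A \<inter> Er) (A' \<inter> Er) else 0)"

end

theory Submission
  imports Defs
begin

text \<open>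
  Stationarity.  It suffices that mu is stationary for each factor (lemma stationary_matmul).
  For P_colour we fix the edge set A: a colouring compatible with A is constant on the
  components of A, so summing the weight of mu over all compatible colourings factorises over
  the components into the product of the W(C) (lemma colour_sum); hence P_colour resamples the
  colouring from the conditional law of mu given A.  For P_bond we fix the colouring: the weight
  of mu factorises into phi_w on the red subgraph times a factor depending only on the blue
  edges (lemma mu_w_split), so stationarity reduces to the stationarity of phi under the red chain.

  Irreducibility.  From any state (A, sigma) a single step of P reaches (A', all red) whenever
  the chain on G can move from A to A'; so ergodicity of P_G lifts to the all-red layer.  To end
  in a target (B, tau) we use stationarity of the red chain to pick a red edge set a of positive
  phi-weight that moves to the red part of B; recolouring to tau and one bond move finish.
\<close>


section \<open>Finite Markov matrices\<close>

lemma stationary_matmul: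
  assumes P: "stationary S P p" and Q: "stationary S Q p"
  shows "stationary S (matmul S P Q) p"
  unfolding stationary_def
proof
  fix z assume z: "z \<in> S"
  have "(\<Sum>x\<in>S. p x * matmul S P Q x z) = (\<Sum>x\<in>S. \<Sum>y\<in>S. p x * P x y * Q y z)"
    unfolding matmul_def by (simp add: sum_distrib_left mult.assoc)
  also have "\<dots> = (\<Sum>y\<in>S. (\<Sum>x\<in>S. p x * P x y) * Q y z)"
    by (subst sum.swap) (simp add: sum_distrib_right)
  also have "\<dots> = (\<Sum>y\<in>S. p y * Q y z)"
    using P unfolding stationary_def by (intro sum.cong) auto
  also have "\<dots> = p z"
    using Q z unfolding stationary_def by blast
  finally show "(\<Sum>x\<in>S. p x * matmul S P Q x z) = p z" .
qed

lemma matmul_pos: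
  assumes "finite S" and "y \<in> S" and "\<And>u. u \<in> S \<Longrightarrow> 0 \<le> P x u * Q u z"
    and "0 < P x y" and "0 < Q y z"
  shows "0 < matmul S P Q x z"
proof -
  have "P x y * Q y z \<le> matmul S P Q x z"
    unfolding matmul_def by (rule member_le_sum) (use assms in auto)
  then show ?thesis using assms(4,5) by (meson less_le_trans mult_pos_pos)
qed

lemma rtrancl_map:
  assumes "(a, b) \<in> R\<^sup>*" and step: "\<And>u v. (u, v) \<in> R \<Longrightarrow> (f u, f v) \<in> R'"
  shows "(f a, f b) \<in> R'\<^sup>*"
  using assms(1) by induction (auto intro: rtrancl_into_rtrancl step)


section \<open>Connected components\<close>

lemma sym_adjrel: "sym (adjrel ends A)"
  unfolding adjrel_def sym_def by auto

lemma adjrel_mono: "A \<subseteq> B \<Longrightarrow> adjrel ends A \<subseteq> adjrel ends B"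
  unfolding adjrel_def by auto

lemma adj_rtrancl_sym: "(x, y) \<in> (adjrel ends A)\<^sup>* \<Longrightarrow> (y, x) \<in> (adjrel ends A)\<^sup>*"
  by (meson sym_adjrel sym_rtrancl symD)

lemma equiv_connrel: "equiv U (connrel ends U A)"
  unfolding equiv_def refl_on_def sym_def trans_def connrel_def
  by (auto intro: adj_rtrancl_sym rtrancl_trans)

lemma quotient_img: "U // r = (\<lambda>x. r `` {x}) ` U"
  unfolding quotient_def by auto

lemma finite_comps: "finite U \<Longrightarrow> finite (comps ends U A)"
  unfolding comps_def quotient_def by auto

lemma comps_fst: "C \<in> comps ends U A \<Longrightarrow> fst C \<noteq> {} \<and> fst C \<subseteq> U"
  unfolding comps_def quotient_def connrel_def by auto

lemma path_in_class:
  assumes edges: "\<forall>e\<in>A. ends e \<subseteq> U" and x: "x \<in> U"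
    and p: "(x, y) \<in> (adjrel ends A)\<^sup>*"
  shows "y \<in> U \<and> (x, y) \<in> (adjrel ends {e\<in>A. ends e \<subseteq> connrel ends U A `` {x}})\<^sup>*"
  using p
proof (induction rule: rtrancl_induct)
  case base
  then show ?case using x by auto
next
  case (step y z)
  from step(2) obtain e where e: "e \<in> A" "y \<in> ends e" "z \<in> ends e"
    unfolding adjrel_def by auto
  have sub: "ends e \<subseteq> connrel ends U A `` {x}"
  proof
    fix w assume w: "w \<in> ends e"
    have "(y, w) \<in> adjrel ends A" using e w unfolding adjrel_def by auto
    then have "(x, w) \<in> (adjrel ends A)\<^sup>*" using step(1) by (meson rtrancl.rtrancl_into_rtrancl)
    moreover have "w \<in> U" using edges e w by auto
    ultimately show "w \<in> connrel ends U A `` {x}" using x unfolding connrel_def by auto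
  qed
  have "(y, z) \<in> adjrel ends {e\<in>A. ends e \<subseteq> connrel ends U A `` {x}}"
    using e sub unfolding adjrel_def by auto
  then show ?case using step(3) edges e by (meson rtrancl.rtrancl_into_rtrancl subsetD)
qed

text \<open>Every component of a spanning subgraph of G is a connected subgraph of G, so the
  hypotheses on the weights apply to it.\<close>
lemma comps_conn:
  assumes "U \<subseteq> V" "A \<subseteq> E" "\<forall>e\<in>A. ends e \<subseteq> U" "C \<in> comps ends U A"
  shows "conn_subgraph V E ends C"
proof -
  obtain x where x: "x \<in> U"
    and C: "C = (connrel ends U A `` {x}, {e\<in>A. ends e \<subseteq> connrel ends U A `` {x}})"
    using assms(4) unfolding comps_def quotient_def by auto
  let ?K = "connrel ends U A `` {x}"
  have xK: "x \<in> ?K" using x unfolding connrel_def by auto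
  have KU: "?K \<subseteq> U" unfolding connrel_def by auto
  have conn: "(y, y') \<in> (adjrel ends {e\<in>A. ends e \<subseteq> ?K})\<^sup>*" if "y \<in> ?K" "y' \<in> ?K" for y y'
  proof -
    have "(x, y) \<in> (adjrel ends A)\<^sup>*" "(x, y') \<in> (adjrel ends A)\<^sup>*"
      using that unfolding connrel_def by auto
    then have "(x, y) \<in> (adjrel ends {e\<in>A. ends e \<subseteq> ?K})\<^sup>*"
      "(x, y') \<in> (adjrel ends {e\<in>A. ends e \<subseteq> ?K})\<^sup>*"
      using path_in_class[OF assms(3) x] by auto
    then show ?thesis by (meson adj_rtrancl_sym rtrancl_trans)
  qed
  show ?thesis unfolding conn_subgraph_def C using xK KU assms(1,2) conn by auto
qed


section \<open>Splitting a colour-compatible edge set\<close>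

lemma graph_ends: "finite_graph V E ends \<Longrightarrow> e \<in> E \<Longrightarrow> ends e \<subseteq> V"
  unfolding finite_graph_def by blast

lemma graph_ends_ne: "finite_graph V E ends \<Longrightarrow> e \<in> E \<Longrightarrow> ends e \<noteq> {}"
  unfolding finite_graph_def by fastforce

lemma graph_finite: "finite_graph V E ends \<Longrightarrow> finite V \<and> finite E"
  unfolding finite_graph_def by blast

lemma UNIV_colour: "(UNIV :: colour set) = {Red, Blue}"
  using colour.exhaust by auto

lemma finite_colourings: "finite V \<Longrightarrow> finite (colourings V)"
  unfolding colourings_def by (intro finite_PiE) (auto simp: UNIV_colour)

definition col_edges :: "'v set \<Rightarrow> 'e set \<Rightarrow> ('e \<Rightarrow> 'v set) \<Rightarrow> ('v \<Rightarrow> colour) \<Rightarrow> colour \<Rightarrow> 'e set" where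
  "col_edges V E ends \<tau> c = {e\<in>E. ends e \<subseteq> col_verts V \<tau> c}"

lemma G_red_eq: "G_red V E ends \<tau> = (col_verts V \<tau> Red, col_edges V E ends \<tau> Red)"
  unfolding G_red_def induced_def col_edges_def by auto

lemma G_blue_eq: "G_blue V E ends \<tau> = (col_verts V \<tau> Blue, col_edges V E ends \<tau> Blue)"
  unfolding G_blue_def induced_def col_edges_def by auto

lemma col_edges_disj:
  assumes "finite_graph V E ends"
  shows "col_edges V E ends \<tau> Red \<inter> col_edges V E ends \<tau> Blue = {}"
proof -
  have False if "e \<in> col_edges V E ends \<tau> Red" "e \<in> col_edges V E ends \<tau> Blue" for e
  proof -
    have "e \<in> E" "ends e \<subseteq> col_verts V \<tau> Red" "ends e \<subseteq> col_verts V \<tau> Blue"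
      using that unfolding col_edges_def by auto
    moreover obtain w where "w \<in> ends e" using graph_ends_ne[OF assms \<open>e \<in> E\<close>] by blast
    ultimately show False unfolding col_verts_def by fastforce
  qed
  then show ?thesis by blast
qed

lemma path_colour:
  assumes g: "finite_graph V E ends" and AE: "A \<subseteq> E" and D: "Delta ends A \<tau>" and x: "x \<in> V"
    and p: "(x, y) \<in> (adjrel ends A)\<^sup>*"
  shows "y \<in> V \<and> \<tau> y = \<tau> x \<and> (x, y) \<in> (adjrel ends (A \<inter> col_edges V E ends \<tau> (\<tau> x)))\<^sup>*"
  using p
proof (induction rule: rtrancl_induct)
  case base
  then show ?case using x by auto
next
  case (step y z)
  from step(2) obtain e where e: "e \<in> A" "y \<in> ends e" "z \<in> ends e"
    unfolding adjrel_def by auto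
  have eV: "ends e \<subseteq> V" using g AE e(1) by (auto dest: graph_ends)
  have col: "\<forall>w\<in>ends e. \<tau> w = \<tau> y" using D e unfolding Delta_def by blast
  have ty: "\<tau> y = \<tau> x" using step(3) by simp
  have "e \<in> col_edges V E ends \<tau> (\<tau> x)"
    using AE e(1) eV col ty unfolding col_edges_def col_verts_def by auto
  then have "(y, z) \<in> adjrel ends (A \<inter> col_edges V E ends \<tau> (\<tau> x))"
    using e unfolding adjrel_def by auto
  then have "(x, z) \<in> (adjrel ends (A \<inter> col_edges V E ends \<tau> (\<tau> x)))\<^sup>*"
    using step(3) by (meson rtrancl.rtrancl_into_rtrancl)
  moreover have "z \<in> V" using eV e by auto
  moreover have "\<tau> z = \<tau> x" using col e ty by metis
  ultimately show ?case by simp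
qed

lemma class_colour:
  assumes g: "finite_graph V E ends" and AE: "A \<subseteq> E" and D: "Delta ends A \<tau>" and x: "x \<in> V"
  shows "connrel ends V A `` {x}
       = connrel ends (col_verts V \<tau> (\<tau> x)) (A \<inter> col_edges V E ends \<tau> (\<tau> x)) `` {x}"
proof
  show "connrel ends V A `` {x}
      \<subseteq> connrel ends (col_verts V \<tau> (\<tau> x)) (A \<inter> col_edges V E ends \<tau> (\<tau> x)) `` {x}"
  proof
    fix y assume "y \<in> connrel ends V A `` {x}"
    then have "(x, y) \<in> (adjrel ends A)\<^sup>*" unfolding connrel_def by auto
    from path_colour[OF g AE D x this] x
    show "y \<in> connrel ends (col_verts V \<tau> (\<tau> x)) (A \<inter> col_edges V E ends \<tau> (\<tau> x)) `` {x}"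
      unfolding connrel_def col_verts_def by simp
  qed
next
  have "(adjrel ends (A \<inter> col_edges V E ends \<tau> (\<tau> x)))\<^sup>* \<subseteq> (adjrel ends A)\<^sup>*"
    by (intro rtrancl_mono adjrel_mono) auto
  then show "connrel ends (col_verts V \<tau> (\<tau> x)) (A \<inter> col_edges V E ends \<tau> (\<tau> x)) `` {x}
      \<subseteq> connrel ends V A `` {x}"
    unfolding connrel_def col_verts_def by auto
qed

lemma comps_split:
  assumes g: "finite_graph V E ends" and AE: "A \<subseteq> E" and D: "Delta ends A \<tau>"
  shows "comps ends V A = comps ends (col_verts V \<tau> Red) (A \<inter> col_edges V E ends \<tau> Red)
             \<union> comps ends (col_verts V \<tau> Blue) (A \<inter> col_edges V E ends \<tau> Blue)"
proof -
  let ?U = "col_verts V \<tau>" and ?A = "\<lambda>c. A \<inter> col_edges V E ends \<tau> c"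
  have V: "V = ?U Red \<union> ?U Blue"
    unfolding col_verts_def using colour.exhaust by auto
  have classes: "(\<lambda>x. connrel ends V A `` {x}) ` ?U c = ?U c // connrel ends (?U c) (?A c)" for c
    unfolding quotient_img
  proof (rule image_cong)
    fix x assume "x \<in> ?U c"
    then have "x \<in> V" "\<tau> x = c" unfolding col_verts_def by auto
    then show "connrel ends V A `` {x} = connrel ends (?U c) (?A c) `` {x}"
      using class_colour[OF g AE D, of x] by simp
  qed simp
  have "V // connrel ends V A = (\<lambda>x. connrel ends V A `` {x}) ` ?U Red
      \<union> (\<lambda>x. connrel ends V A `` {x}) ` ?U Blue"
    unfolding quotient_img using V by blast
  then have q: "V // connrel ends V A = ?U Red // connrel ends (?U Red) (?A Red)
      \<union> ?U Blue // connrel ends (?U Blue) (?A Blue)"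
    unfolding classes .
  have edges: "(K, {e\<in>A. ends e \<subseteq> K}) = (K, {e\<in>?A c. ends e \<subseteq> K})"
    if "K \<in> ?U c // connrel ends (?U c) (?A c)" for K c
  proof -
    have "K \<subseteq> ?U c" using that unfolding quotient_def connrel_def by auto
    then show ?thesis using AE unfolding col_edges_def by auto
  qed
  show ?thesis unfolding comps_def q image_Un
    by (intro arg_cong2[where f="(\<union>)"] image_cong refl edges)
qed

lemma comps_col_disj:
  "comps ends (col_verts V \<tau> Red) X \<inter> comps ends (col_verts V \<tau> Blue) Y = {}"
proof -
  have False if "C \<in> comps ends (col_verts V \<tau> Red) X" "C \<in> comps ends (col_verts V \<tau> Blue) Y" for C
    using comps_fst[OF that(1)] comps_fst[OF that(2)] unfolding col_verts_def by fastforce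
  then show ?thesis by blast
qed

lemma col_of_comp: "C \<in> comps ends (col_verts V \<tau> c) X \<Longrightarrow> col_of \<tau> C = c"
  using comps_fst[of C ends "col_verts V \<tau> c" X] unfolding col_of_def col_verts_def
  by (metis (mono_tags, lifting) ex_in_conv mem_Collect_eq someI_ex subsetD)

lemma edge_split:
  assumes g: "finite_graph V E ends" and AE: "A \<subseteq> E" and D: "Delta ends A \<tau>"
  shows "A = (A \<inter> col_edges V E ends \<tau> Red) \<union> (A \<inter> col_edges V E ends \<tau> Blue)"
proof -
  have "e \<in> col_edges V E ends \<tau> Red \<or> e \<in> col_edges V E ends \<tau> Blue" if e: "e \<in> A" for e
  proof -
    have eE: "e \<in> E" using e AE by blast
    obtain w where w: "w \<in> ends e" using graph_ends_ne[OF g eE] by blast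
    have "\<forall>u\<in>ends e. \<tau> u = \<tau> w" using D e w unfolding Delta_def by blast
    then have "e \<in> col_edges V E ends \<tau> (\<tau> w)"
      using eE graph_ends[OF g eE] unfolding col_edges_def col_verts_def by auto
    then show ?thesis by (cases "\<tau> w") auto
  qed
  then show ?thesis by blast
qed

lemma Delta_union:
  assumes "a \<subseteq> col_edges V E ends \<tau> Red" "b \<subseteq> col_edges V E ends \<tau> Blue"
  shows "Delta ends (a \<union> b) \<tau>"
  unfolding Delta_def
proof (intro ballI)
  fix e x y assume e: "e \<in> a \<union> b" and xy: "x \<in> ends e" "y \<in> ends e"
  obtain c where "ends e \<subseteq> col_verts V \<tau> c" using assms e unfolding col_edges_def by blast
  then show "\<tau> x = \<tau> y" using xy unfolding col_verts_def by auto
qed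


section \<open>Summing over compatible colourings\<close>

lemma class_colouring_compatible:
  assumes gr: "finite_graph V E ends" and AE: "A \<subseteq> E"
  shows "restrict (\<lambda>v. h (connrel ends V A `` {v})) V \<in> {\<sigma>\<in>colourings V. Delta ends A \<sigma>}"
proof -
  let ?r = "connrel ends V A"
  have "Delta ends A (restrict (\<lambda>v. h (?r `` {v})) V)"
    unfolding Delta_def
  proof (intro ballI)
    fix e x y assume e: "e \<in> A" "x \<in> ends e" "y \<in> ends e"
    have eV: "ends e \<subseteq> V" using AE e(1) graph_ends[OF gr] by blast
    moreover have "(x, y) \<in> adjrel ends A" using e unfolding adjrel_def by auto
    ultimately have "(x, y) \<in> ?r" using e unfolding connrel_def by auto
    then have "?r `` {x} = ?r `` {y}" using equiv_connrel by (metis equiv_class_eq_iff)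
    then show "restrict (\<lambda>v. h (?r `` {v})) V x = restrict (\<lambda>v. h (?r `` {v})) V y"
      using eV e by auto
  qed
  then show ?thesis unfolding colourings_def by auto
qed

lemma compatible_colourings_bij:
  fixes V :: "'v set"
  assumes gr: "finite_graph V E ends" and AE: "A \<subseteq> E"
  defines "K \<equiv> V // connrel ends V A"
  shows "bij_betw (\<lambda>\<sigma>. restrict (\<lambda>k. \<sigma> (SOME v. v \<in> k)) K)
           {\<sigma>\<in>colourings V. Delta ends A \<sigma>} (K \<rightarrow>\<^sub>E UNIV)"
proof -
  let ?r = "connrel ends V A"
  let ?D = "{\<sigma>\<in>colourings V. Delta ends A \<sigma>}"
  let ?\<Phi> = "\<lambda>\<sigma> :: 'v \<Rightarrow> colour. restrict (\<lambda>k. \<sigma> (SOME v. v \<in> k)) K"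
  let ?\<Psi> = "\<lambda>h :: 'v set \<Rightarrow> colour. restrict (\<lambda>v. h (?r `` {v})) V"
  have kV: "k \<subseteq> V" "k \<noteq> {}" if "k \<in> K" for k
    using that unfolding K_def quotient_def connrel_def by auto
  have some_in: "(SOME v. v \<in> k) \<in> k" if "k \<in> K" for k
    using kV[OF that] by (meson ex_in_conv someI_ex)
  have class_of: "?r `` {w} = k" if k: "k \<in> K" and w: "w \<in> k" for k w
  proof -
    obtain v where v: "v \<in> V" "k = ?r `` {v}" using k unfolding K_def by (rule quotientE)
    then have "(v, w) \<in> ?r" using w by auto
    then show ?thesis using equiv_connrel v by (metis equiv_class_eq_iff)
  qed
  have left_inv: "\<forall>\<sigma>\<in>?D. ?\<Psi> (?\<Phi> \<sigma>) = \<sigma>"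
  proof
    fix \<sigma> assume \<sigma>: "\<sigma> \<in> ?D"
    have "\<sigma> (SOME w. w \<in> ?r `` {v}) = \<sigma> v" if v: "v \<in> V" for v
    proof -
      have "?r `` {v} \<in> K" using v unfolding K_def quotient_def by auto
      then have "(v, SOME w. w \<in> ?r `` {v}) \<in> (adjrel ends A)\<^sup>*"
        using some_in unfolding connrel_def by blast
      then show ?thesis using path_colour[OF gr AE _ v] \<sigma> by auto
    qed
    moreover have "\<sigma> \<in> extensional V" using \<sigma> unfolding colourings_def by (auto simp: PiE_def)
    ultimately show "?\<Psi> (?\<Phi> \<sigma>) = \<sigma>"
      unfolding K_def by (intro extensionalityI[of _ V]) (auto simp: quotientI)
  qed
  have right_inv: "\<forall>h\<in>K \<rightarrow>\<^sub>E UNIV. ?\<Phi> (?\<Psi> h) = h"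
  proof
    fix h :: "'v set \<Rightarrow> colour" assume h: "h \<in> K \<rightarrow>\<^sub>E UNIV"
    have "?\<Psi> h (SOME v. v \<in> k) = h k" if k: "k \<in> K" for k
      using some_in[OF k] kV[OF k] class_of[OF k] by auto
    then show "?\<Phi> (?\<Psi> h) = h"
      using h by (intro extensionalityI[of _ K]) (auto simp: PiE_def)
  qed
  have Psi_compatible: "?\<Psi> h \<in> ?D" for h
    by (rule class_colouring_compatible[OF gr AE])
  show ?thesis
    by (rule bij_betw_byWitness[where f'="\<lambda>h :: 'v set \<Rightarrow> colour. restrict (\<lambda>v. h (connrel ends V A `` {v})) V"])
      (use left_inv right_inv Psi_compatible in auto)
qed

lemma colour_sum:
  fixes g :: "colour \<Rightarrow> 'v set \<times> 'e set \<Rightarrow> real"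
  assumes gr: "finite_graph V E ends" and AE: "A \<subseteq> E"
  shows "(\<Sum>\<sigma>\<in>{\<sigma>\<in>colourings V. Delta ends A \<sigma>}. \<Prod>C\<in>comps ends V A. g (col_of \<sigma> C) C)
       = (\<Prod>C\<in>comps ends V A. g Red C + g Blue C)"
proof -
  let ?K = "V // connrel ends V A"
  let ?ed = "\<lambda>k. {e\<in>A. ends e \<subseteq> k}"
  let ?\<Phi> = "\<lambda>\<sigma>. restrict (\<lambda>k. \<sigma> (SOME v. v \<in> k)) ?K"
  have finK: "finite ?K" using graph_finite[OF gr] unfolding quotient_img by simp
  have prodK: "(\<Prod>C\<in>comps ends V A. f C) = (\<Prod>k\<in>?K. f (k, ?ed k))" for f :: "_ \<Rightarrow> real"
    unfolding comps_def by (rule prod.reindex[unfolded comp_def]) (auto intro: inj_onI)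
  have "(\<Sum>\<sigma>\<in>{\<sigma>\<in>colourings V. Delta ends A \<sigma>}. \<Prod>C\<in>comps ends V A. g (col_of \<sigma> C) C)
      = (\<Sum>\<sigma>\<in>{\<sigma>\<in>colourings V. Delta ends A \<sigma>}. \<Prod>k\<in>?K. g (?\<Phi> \<sigma> k) (k, ?ed k))"
    unfolding prodK col_of_def by (intro sum.cong prod.cong refl) simp
  also have "\<dots> = (\<Sum>h\<in>?K \<rightarrow>\<^sub>E UNIV. \<Prod>k\<in>?K. g (h k) (k, ?ed k))"
    by (rule sum.reindex_bij_betw[OF compatible_colourings_bij[OF gr AE]])
  also have "\<dots> = (\<Prod>k\<in>?K. \<Sum>c\<in>UNIV. g c (k, ?ed k))"
    by (rule prod_sum_PiE[symmetric]) (auto simp: finK UNIV_colour)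
  also have "\<dots> = (\<Prod>C\<in>comps ends V A. g Red C + g Blue C)"
    unfolding prodK by (simp add: UNIV_colour)
  finally show ?thesis .
qed


section \<open>Factorising the joint weight\<close>

definition blue_weight :: "'v set \<Rightarrow> ('e \<Rightarrow> 'v set) \<Rightarrow> ('v set \<times> 'e set \<Rightarrow> real)
    \<Rightarrow> ('v set \<times> 'e set \<Rightarrow> real) \<Rightarrow> ('v \<Rightarrow> colour) \<Rightarrow> 'e set \<Rightarrow> real" where
  "blue_weight V ends W Wh \<tau> b = (\<Prod>C\<in>comps ends (col_verts V \<tau> Blue) b. W C - Wh C)"

lemma mu_w_split:
  assumes g: "finite_graph V E ends" and AE: "A \<subseteq> E" and D: "Delta ends A \<tau>"
  shows "mu_w V ends W Wh (A, \<tau>) = phi_w ends Wh (G_red V E ends \<tau>) (A \<inter> col_edges V E ends \<tau> Red)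
      * blue_weight V ends W Wh \<tau> (A \<inter> col_edges V E ends \<tau> Blue)"
proof -
  let ?R = "comps ends (col_verts V \<tau> Red) (A \<inter> col_edges V E ends \<tau> Red)"
  let ?B = "comps ends (col_verts V \<tau> Blue) (A \<inter> col_edges V E ends \<tau> Blue)"
  have fin: "finite (col_verts V \<tau> c)" for c
    using graph_finite[OF g] unfolding col_verts_def by auto
  have "mu_w V ends W Wh (A, \<tau>) = (\<Prod>C\<in>?R \<union> ?B. Wc W Wh (col_of \<tau> C) C)"
    using D unfolding mu_w_def by (simp add: comps_split[OF g AE D])
  also have "\<dots> = (\<Prod>C\<in>?R. Wc W Wh (col_of \<tau> C) C) * (\<Prod>C\<in>?B. Wc W Wh (col_of \<tau> C) C)"
    by (rule prod.union_disjoint) (auto simp: finite_comps fin comps_col_disj)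
  also have "\<dots> = phi_w ends Wh (G_red V E ends \<tau>) (A \<inter> col_edges V E ends \<tau> Red)
      * blue_weight V ends W Wh \<tau> (A \<inter> col_edges V E ends \<tau> Blue)"
    unfolding phi_w_def blue_weight_def G_red_eq fst_conv
    by (intro arg_cong2[where f="(*)"] prod.cong) (auto simp: col_of_comp Wc_def)
  finally show ?thesis .
qed

lemma phi_w_scale:
  assumes "finite (snd H)" and nonneg: "\<And>a. a \<subseteq> snd H \<Longrightarrow> 0 \<le> phi_w ends W H a"
    and "a0 \<subseteq> snd H" and "0 < phi_w ends W H a0"
  obtains Z where "0 < Z" and "\<And>a. phi_w ends W H a = Z * phi ends W H a"
proof
  let ?Z = "\<Sum>B\<in>Pow (snd H). phi_w ends W H B"
  have "phi_w ends W H a0 \<le> ?Z"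
    by (rule member_le_sum) (use assms in auto)
  then show "0 < ?Z" using assms(4) by linarith
  then show "phi_w ends W H a = ?Z * phi ends W H a" for a
    unfolding phi_def by simp
qed

definition all_red :: "'v set \<Rightarrow> 'v \<Rightarrow> colour" where
  "all_red V = (\<lambda>v\<in>V. Red)"

lemma all_red_colouring: "all_red V \<in> colourings V"
  unfolding all_red_def colourings_def by auto

lemma Delta_all_red: "finite_graph V E ends \<Longrightarrow> A \<subseteq> E \<Longrightarrow> Delta ends A (all_red V)"
  unfolding Delta_def all_red_def using graph_ends by (fastforce simp: subset_iff)

lemma col_verts_all_red: "col_verts V (all_red V) Red = V" "col_verts V (all_red V) Blue = {}"
  unfolding col_verts_def all_red_def by auto

lemma col_edges_all_red:
  assumes "finite_graph V E ends"
  shows "col_edges V E ends (all_red V) Red = E" "col_edges V E ends (all_red V) Blue = {}"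
  unfolding col_edges_def col_verts_all_red using graph_ends[OF assms] graph_ends_ne[OF assms]
  by auto

lemma G_red_all_red: "finite_graph V E ends \<Longrightarrow> G_red V E ends (all_red V) = (V, E)"
  unfolding G_red_eq col_verts_all_red col_edges_all_red by simp

lemma col_of_all_red: "C \<in> comps ends V A \<Longrightarrow> col_of (all_red V) C = Red"
  by (metis col_of_comp col_verts_all_red(1))


section \<open>The joint measure mu\<close>

locale bond_colour =
  fixes V :: "'v set" and E :: "'e set" and ends :: "'e \<Rightarrow> 'v set"
    and W Wh :: "'v set \<times> 'e set \<Rightarrow> real"
  assumes graph: "finite_graph V E ends"
    and weights: "\<And>C. conn_subgraph V E ends C \<Longrightarrow>
        W C \<ge> 0 \<and> Wh C \<ge> 0 \<and> (W C = 0 \<longrightarrow> Wh C = 0) \<and> (W C > 0 \<longrightarrow> 0 < Wh C \<and> Wh C < W C)"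
begin

abbreviation S where "S \<equiv> supp_mu V E ends W Wh"
abbreviation mw where "mw \<equiv> mu_w V ends W Wh"
abbreviation m where "m \<equiv> mu V E ends W Wh"
abbreviation Z where "Z \<equiv> \<Sum>y\<in>states V E. mw y"
abbreviation Ered where "Ered \<tau> \<equiv> col_edges V E ends \<tau> Red"
abbreviation Eblue where "Eblue \<tau> \<equiv> col_edges V E ends \<tau> Blue"
abbreviation Gred where "Gred \<tau> \<equiv> G_red V E ends \<tau>"

lemma finV: "finite V" and finE: "finite E"
  using graph_finite[OF graph] by auto

lemma fin_states: "finite (states V E)"
  unfolding states_def using finV finE finite_colourings by auto

lemma states_iff: "(A, \<sigma>) \<in> states V E \<longleftrightarrow> A \<subseteq> E \<and> \<sigma> \<in> colourings V"
  unfolding states_def by auto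

lemma supp_states: "S \<subseteq> states V E"
  unfolding supp_mu_def by auto

lemma finite_supp: "finite S"
  using fin_states supp_states finite_subset by blast

lemma Wc_nonneg: "conn_subgraph V E ends C \<Longrightarrow> 0 \<le> Wc W Wh c C"
  using weights[of C] by (cases c) (auto simp: Wc_def)

lemma Wc_pos_iff: "conn_subgraph V E ends C \<Longrightarrow> 0 < Wc W Wh c C \<longleftrightarrow> 0 < W C"
  using weights[of C] by (cases c) (auto simp: Wc_def)

lemma conn_comp: "A \<subseteq> E \<Longrightarrow> C \<in> comps ends V A \<Longrightarrow> conn_subgraph V E ends C"
  by (rule comps_conn[of V V A E]) (use graph_ends[OF graph] in auto)

lemma conn_col_comp:
  "a \<subseteq> col_edges V E ends \<tau> c \<Longrightarrow> C \<in> comps ends (col_verts V \<tau> c) a \<Longrightarrow> conn_subgraph V E ends C"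
  by (rule comps_conn[of "col_verts V \<tau> c" V a E]) (auto simp: col_edges_def col_verts_def)

lemma mw_nonneg: "fst x \<subseteq> E \<Longrightarrow> 0 \<le> mw x"
  unfolding mu_w_def using conn_comp Wc_nonneg by (auto intro!: prod_nonneg)

lemma Z_nonneg: "0 \<le> Z"
  unfolding states_def by (rule sum_nonneg) (auto intro!: mw_nonneg)

lemma m_eq: "m x = mw x / Z"
  unfolding mu_def ..

lemma supp_iff: "x \<in> S \<longleftrightarrow> x \<in> states V E \<and> 0 < mw x \<and> 0 < Z"
proof -
  have "x \<in> states V E \<Longrightarrow> 0 \<le> mw x" using mw_nonneg unfolding states_def by auto
  then show ?thesis unfolding supp_mu_def m_eq using Z_nonneg
    by (auto simp: zero_less_divide_iff)
qed

lemma not_supp_zero: "x \<in> states V E \<Longrightarrow> x \<notin> S \<Longrightarrow> m x = 0"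
  using mw_nonneg[of x] Z_nonneg unfolding supp_mu_def m_eq states_def by force

lemma supp_props:
  assumes "(A, \<sigma>) \<in> S"
  shows "A \<subseteq> E" "\<sigma> \<in> colourings V" "Delta ends A \<sigma>" "0 < Z"
    "\<And>C. C \<in> comps ends V A \<Longrightarrow> 0 < W C"
proof -
  have pos: "0 < mw (A, \<sigma>)" and "0 < Z" and st: "(A, \<sigma>) \<in> states V E"
    using assms supp_iff by auto
  then show AE: "A \<subseteq> E" and "\<sigma> \<in> colourings V" and "0 < Z" by (auto simp: states_iff)
  show D: "Delta ends A \<sigma>" using pos unfolding mu_w_def by (auto split: if_splits)
  fix C assume C: "C \<in> comps ends V A"
  have "(\<Prod>C\<in>comps ends V A. Wc W Wh (col_of \<sigma> C) C) \<noteq> 0" using pos D unfolding mu_w_def by simp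
  then have "Wc W Wh (col_of \<sigma> C) C \<noteq> 0"
    using C finite_comps[OF finV] by (meson prod_zero_iff)
  then show "0 < W C"
    using Wc_nonneg Wc_pos_iff conn_comp[OF AE C] by (simp add: order_less_le)
qed

lemma recombine:
  assumes a: "a \<subseteq> Ered \<tau>" and b: "b \<subseteq> Eblue \<tau>"
  shows "a \<union> b \<subseteq> E" "(a \<union> b) \<inter> Ered \<tau> = a" "(a \<union> b) \<inter> Eblue \<tau> = b"
    "mw (a \<union> b, \<tau>) = phi_w ends Wh (Gred \<tau>) a * blue_weight V ends W Wh \<tau> b"
proof -
  show "a \<union> b \<subseteq> E" using a b unfolding col_edges_def by blast
  moreover show "(a \<union> b) \<inter> Ered \<tau> = a" "(a \<union> b) \<inter> Eblue \<tau> = b"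
    using a b col_edges_disj[OF graph] by blast+
  ultimately show "mw (a \<union> b, \<tau>) = phi_w ends Wh (Gred \<tau>) a * blue_weight V ends W Wh \<tau> b"
    using mu_w_split[OF graph _ Delta_union[OF a b]] by simp
qed

lemma phi_w_red_nonneg: "a \<subseteq> Ered \<tau> \<Longrightarrow> 0 \<le> phi_w ends Wh (Gred \<tau>) a"
  unfolding phi_w_def G_red_eq fst_conv using conn_col_comp weights by (auto intro!: prod_nonneg)

lemma blue_weight_nonneg: "b \<subseteq> Eblue \<tau> \<Longrightarrow> 0 \<le> blue_weight V ends W Wh \<tau> b"
  unfolding blue_weight_def using conn_col_comp Wc_nonneg[of _ Blue]
  by (auto intro!: prod_nonneg simp: Wc_def)

lemma supp_factors_pos:
  assumes "(B, \<tau>) \<in> S"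
  shows "0 < phi_w ends Wh (Gred \<tau>) (B \<inter> Ered \<tau>)" "0 < blue_weight V ends W Wh \<tau> (B \<inter> Eblue \<tau>)"
proof -
  note sp = supp_props[OF assms]
  have "0 < phi_w ends Wh (Gred \<tau>) (B \<inter> Ered \<tau>) * blue_weight V ends W Wh \<tau> (B \<inter> Eblue \<tau>)"
    using supp_iff assms mu_w_split[OF graph sp(1,3)] by auto
  then show "0 < phi_w ends Wh (Gred \<tau>) (B \<inter> Ered \<tau>)" "0 < blue_weight V ends W Wh \<tau> (B \<inter> Eblue \<tau>)"
    using phi_w_red_nonneg[of "B \<inter> Ered \<tau>" \<tau>] blue_weight_nonneg[of "B \<inter> Eblue \<tau>" \<tau>]
    by (auto simp: zero_less_mult_iff)
qed

lemma supp_of_factors_pos: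
  assumes "a \<subseteq> Ered \<tau>" "b \<subseteq> Eblue \<tau>" "\<tau> \<in> colourings V" "0 < Z"
    and "0 < phi_w ends Wh (Gred \<tau>) a" "0 < blue_weight V ends W Wh \<tau> b"
  shows "(a \<union> b, \<tau>) \<in> S"
  using assms recombine[OF assms(1,2)] by (simp add: supp_iff states_iff)

lemma phi_red_scale:
  assumes "(B, \<tau>) \<in> S"
  obtains Zr where "0 < Zr" "\<And>a. phi_w ends Wh (Gred \<tau>) a = Zr * phi ends Wh (Gred \<tau>) a"
proof (rule phi_w_scale)
  show "finite (snd (Gred \<tau>))"
    using finE unfolding G_red_eq col_edges_def by simp
  show "0 \<le> phi_w ends Wh (Gred \<tau>) a" if "a \<subseteq> snd (Gred \<tau>)" for a
    using phi_w_red_nonneg that unfolding G_red_eq by simp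
  show "B \<inter> Ered \<tau> \<subseteq> snd (Gred \<tau>)" unfolding G_red_eq by simp
  show "0 < phi_w ends Wh (Gred \<tau>) (B \<inter> Ered \<tau>)" by (rule supp_factors_pos(1)[OF assms])
qed (use that in blast)

lemma mw_all_red: "A \<subseteq> E \<Longrightarrow> mw (A, all_red V) = phi_w ends Wh (V, E) A"
  unfolding mu_w_def phi_w_def using Delta_all_red[OF graph, of A]
  by (simp add: Wc_def col_of_all_red cong: prod.cong)

lemma phi_G_pos_iff:
  assumes "A \<subseteq> E"
  shows "0 < phi ends Wh (V, E) A \<longleftrightarrow> 0 < phi_w ends Wh (V, E) A"
proof -
  have nonneg: "0 \<le> phi_w ends Wh (V, E) B" if "B \<subseteq> E" for B
    using phi_w_red_nonneg[of B "all_red V"] that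
    by (simp add: col_edges_all_red[OF graph] G_red_eq col_verts_all_red)
  then have "phi_w ends Wh (V, E) A \<le> (\<Sum>B\<in>Pow E. phi_w ends Wh (V, E) B)"
    by (intro member_le_sum) (use assms finE in auto)
  with nonneg[OF assms] show ?thesis
    unfolding phi_def by (auto simp: zero_less_divide_iff)
qed

lemma supp_all_red_iff:
  assumes "0 < Z"
  shows "(A, all_red V) \<in> S \<longleftrightarrow> A \<in> {A \<in> Pow E. 0 < phi ends Wh (V, E) A}"
  using assms mw_all_red phi_G_pos_iff all_red_colouring
  by (auto simp: supp_iff states_iff)

lemma supp_all_red:
  assumes "(A, \<sigma>) \<in> S" shows "(A, all_red V) \<in> S"
proof -
  note sp = supp_props[OF assms]
  have "0 < (\<Prod>C\<in>comps ends V A. Wc W Wh Red C)"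
    using sp(5) Wc_pos_iff conn_comp[OF sp(1)] by (intro prod_pos) blast
  then have "0 < mw (A, all_red V)"
    unfolding mu_w_def using Delta_all_red[OF graph sp(1)] by (simp add: col_of_all_red cong: prod.cong)
  then show ?thesis using supp_iff sp all_red_colouring by (auto simp: states_iff)
qed


section \<open>The colour move\<close>

lemma P_colour_nonneg: "fst x \<subseteq> E \<Longrightarrow> 0 \<le> P_colour V ends W Wh x y"
  unfolding P_colour_def using conn_comp Wc_nonneg weights
  by (auto intro!: prod_nonneg divide_nonneg_nonneg)

lemma P_colour_pos:
  assumes "(A, \<tau>) \<in> S" shows "0 < P_colour V ends W Wh (A, \<sigma>) (A, \<tau>)"
proof -
  note sp = supp_props[OF assms]
  have "0 < (\<Prod>C\<in>comps ends V A. Wc W Wh (col_of \<tau> C) C / W C)"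
    using sp(5) Wc_pos_iff conn_comp[OF sp(1)] by (intro prod_pos) simp
  then show ?thesis unfolding P_colour_def using sp(3) by simp
qed

text \<open>mu is stationary for the colour move: summing over the colourings compatible with A
  recovers the weight of A (colour_sum), and P_colour is the conditional law of the colouring.\<close>
lemma stationary_P_colour: "stationary S (P_colour V ends W Wh) m"
  unfolding stationary_def
proof
  fix y assume y: "y \<in> S"
  obtain A \<sigma>' where yA: "y = (A, \<sigma>')" by (cases y)
  note sp = supp_props[OF y[unfolded yA]]
  let ?f = "\<lambda>x. m x * P_colour V ends W Wh x y"
  let ?D = "{\<sigma>\<in>colourings V. Delta ends A \<sigma>}"
  let ?w = "\<lambda>\<sigma>. \<Prod>C\<in>comps ends V A. Wc W Wh (col_of \<sigma> C) C"
  let ?Pcy = "\<Prod>C\<in>comps ends V A. Wc W Wh (col_of \<sigma>' C) C / W C"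
  have vanish: "?f x = 0" if "x \<in> states V E - (\<lambda>\<sigma>. (A, \<sigma>)) ` ?D" for x
  proof -
    obtain A1 \<sigma> where xA: "x = (A1, \<sigma>)" by (cases x)
    show ?thesis
    proof (cases "A1 = A")
      case True
      then have "mw x = 0" using that unfolding xA mu_w_def by (auto simp: states_iff)
      then show ?thesis unfolding m_eq by simp
    qed (simp add: xA yA P_colour_def)
  qed
  have "(\<Sum>x\<in>S. ?f x) = (\<Sum>x\<in>states V E. ?f x)"
    by (rule sum.mono_neutral_left[OF fin_states supp_states]) (auto simp: not_supp_zero)
  also have "\<dots> = (\<Sum>x\<in>(\<lambda>\<sigma>. (A, \<sigma>)) ` ?D. ?f x)"
    by (rule sum.mono_neutral_right[OF fin_states]) (use sp(1) vanish in \<open>auto simp: states_iff\<close>)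
  also have "\<dots> = (\<Sum>\<sigma>\<in>?D. ?w \<sigma> / Z * ?Pcy)"
    by (subst sum.reindex) (auto intro: inj_onI simp: m_eq mu_w_def P_colour_def yA sp(3))
  also have "\<dots> = (\<Prod>C\<in>comps ends V A. W C) * ?Pcy / Z"
    using colour_sum[OF graph sp(1), of "Wc W Wh"]
    by (simp add: Wc_def sum_divide_distrib[symmetric] sum_distrib_right[symmetric])
  also have "(\<Prod>C\<in>comps ends V A. W C) * ?Pcy = ?w \<sigma>'"
    unfolding prod.distrib[symmetric] using sp(5)
    by (intro prod.cong refl) (simp add: less_imp_neq[symmetric])
  also have "?w \<sigma>' / Z = m y"
    unfolding m_eq yA mu_w_def using sp(3) by simp
  finally show "(\<Sum>x\<in>S. ?f x) = m y" .
qed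

end

section \<open>The bond move\<close>

locale bond_colour_chain = bond_colour V E ends W Wh
  for V :: "'v set" and E :: "'e set" and ends :: "'e \<Rightarrow> 'v set"
    and W Wh :: "'v set \<times> 'e set \<Rightarrow> real" +
  fixes Pm :: "'v set \<times> 'e set \<Rightarrow> 'e set \<Rightarrow> 'e set \<Rightarrow> real"
  assumes Pm_trans: "\<And>\<sigma> A. (A, \<sigma>) \<in> supp_mu V E ends W Wh \<Longrightarrow>
        transition_matrix (Pow (snd (G_red V E ends \<sigma>))) (Pm (G_red V E ends \<sigma>))"
    and Pm_stat: "\<And>\<sigma> A. (A, \<sigma>) \<in> supp_mu V E ends W Wh \<Longrightarrow>
        stationary (Pow (snd (G_red V E ends \<sigma>))) (Pm (G_red V E ends \<sigma>))
                   (phi ends Wh (G_red V E ends \<sigma>))"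
    and Pm_erg: "irreducible_on {A \<in> Pow E. phi ends Wh (V, E) A > 0} (Pm (V, E))"
begin

abbreviation P where "P \<equiv> matmul S (P_colour V ends W Wh) (P_bond V E ends Pm)"

lemma P_bond_eval: "P_bond V E ends Pm (A, \<sigma>) (B, \<tau>) =
   (if \<sigma> = \<tau> \<and> Delta ends B \<sigma> \<and> A \<inter> Eblue \<sigma> = B \<inter> Eblue \<sigma>
    then Pm (Gred \<sigma>) (A \<inter> Ered \<sigma>) (B \<inter> Ered \<sigma>) else 0)"
  unfolding P_bond_def Let_def G_blue_eq G_red_eq by auto

lemma P_bond_nonneg:
  assumes "y \<in> S" shows "0 \<le> P_bond V E ends Pm y z"
proof -
  obtain A \<sigma> B \<tau> where yA: "y = (A, \<sigma>)" and zB: "z = (B, \<tau>)" by (cases y, cases z)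
  have "0 \<le> Pm (Gred \<sigma>) (A \<inter> Ered \<sigma>) (B \<inter> Ered \<sigma>)"
    using Pm_trans[OF assms[unfolded yA]] unfolding transition_matrix_def G_red_eq by auto
  then show ?thesis unfolding yA zB P_bond_eval by auto
qed

lemma bond_predecessors:
  assumes "x \<in> states V E - (\<lambda>a. (a \<union> B \<inter> Eblue \<tau>, \<tau>)) ` Pow (Ered \<tau>)"
  shows "m x * P_bond V E ends Pm x (B, \<tau>) = 0"
proof -
  obtain A \<sigma> where xA: "x = (A, \<sigma>)" by (cases x)
  have AE: "A \<subseteq> E" using assms xA by (auto simp: states_iff)
  consider "\<sigma> = \<tau>" "Delta ends A \<tau>" "A \<inter> Eblue \<tau> = B \<inter> Eblue \<tau>" | "\<sigma> \<noteq> \<tau>"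
    | "\<sigma> = \<tau>" "\<not> Delta ends A \<tau>" | "A \<inter> Eblue \<tau> \<noteq> B \<inter> Eblue \<tau>"
    by blast
  then show ?thesis
  proof cases
    case 1
    then have "(A \<inter> Ered \<tau>) \<union> B \<inter> Eblue \<tau> = A" using edge_split[OF graph AE, of \<tau>] by blast
    then have "x \<in> (\<lambda>a. (a \<union> B \<inter> Eblue \<tau>, \<tau>)) ` Pow (Ered \<tau>)"
      using 1 xA by (intro image_eqI[of _ _ "A \<inter> Ered \<tau>"]) auto
    then show ?thesis using assms by blast
  next
    case 3
    then have "mw x = 0" unfolding xA mu_w_def by simp
    then show ?thesis unfolding m_eq by simp
  qed (auto simp: xA P_bond_eval)
qed

lemma bond_flow:
  assumes z: "(B, \<tau>) \<in> S" and a: "a \<subseteq> Ered \<tau>"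
  shows "m (a \<union> B \<inter> Eblue \<tau>, \<tau>) * P_bond V E ends Pm (a \<union> B \<inter> Eblue \<tau>, \<tau>) (B, \<tau>)
       = blue_weight V ends W Wh \<tau> (B \<inter> Eblue \<tau>) / Z
         * (phi_w ends Wh (Gred \<tau>) a * Pm (Gred \<tau>) a (B \<inter> Ered \<tau>))"
proof -
  note rc = recombine[OF a, of "B \<inter> Eblue \<tau>"]
  have "P_bond V E ends Pm (a \<union> B \<inter> Eblue \<tau>, \<tau>) (B, \<tau>) = Pm (Gred \<tau>) a (B \<inter> Ered \<tau>)"
    unfolding P_bond_eval using supp_props(3)[OF z] rc by simp
  then show ?thesis by (simp add: m_eq rc(4) mult_ac)
qed

text \<open>mu is stationary for the bond move: with the colouring and the blue edges frozen, mu is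
  proportional to phi on the red subgraph, which the red chain preserves.\<close>
lemma stationary_P_bond: "stationary S (P_bond V E ends Pm) m"
  unfolding stationary_def
proof
  fix z assume z: "z \<in> S"
  obtain B \<tau> where zB: "z = (B, \<tau>)" by (cases z)
  note sp = supp_props[OF z[unfolded zB]]
  define b0 where "b0 = B \<inter> Eblue \<tau>"
  define br where "br = B \<inter> Ered \<tau>"
  obtain Zr where Zr: "0 < Zr" "\<And>a. phi_w ends Wh (Gred \<tau>) a = Zr * phi ends Wh (Gred \<tau>) a"
    using phi_red_scale[OF z[unfolded zB]] by blast
  have stat: "(\<Sum>a\<in>Pow (Ered \<tau>). phi ends Wh (Gred \<tau>) a * Pm (Gred \<tau>) a br) = phi ends Wh (Gred \<tau>) br"
    using Pm_stat[OF z[unfolded zB]] unfolding stationary_def G_red_eq br_def by auto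
  let ?f = "\<lambda>x. m x * P_bond V E ends Pm x z"
  let ?g = "\<lambda>a. (a \<union> b0, \<tau>)"
  have rc: "(a \<union> b0) \<inter> Ered \<tau> = a" "a \<union> b0 \<subseteq> E" if "a \<in> Pow (Ered \<tau>)" for a
    using recombine[of a \<tau> b0] that unfolding b0_def by auto
  have "(\<Sum>x\<in>S. ?f x) = (\<Sum>x\<in>states V E. ?f x)"
    by (rule sum.mono_neutral_left[OF fin_states supp_states]) (auto simp: not_supp_zero)
  also have "\<dots> = (\<Sum>x\<in>?g ` Pow (Ered \<tau>). ?f x)"
  proof (rule sum.mono_neutral_right[OF fin_states])
    show "?g ` Pow (Ered \<tau>) \<subseteq> states V E" using rc(2) sp(2) by (auto simp: states_iff)
  qed (unfold zB b0_def, intro ballI bond_predecessors)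
  also have "\<dots> = (\<Sum>a\<in>Pow (Ered \<tau>). ?f (?g a))"
  proof (rule sum.reindex[unfolded comp_def], rule inj_onI)
    fix a a' assume a: "a \<in> Pow (Ered \<tau>)" and a': "a' \<in> Pow (Ered \<tau>)" and "?g a = ?g a'"
    then have "(a \<union> b0) \<inter> Ered \<tau> = (a' \<union> b0) \<inter> Ered \<tau>" by simp
    then show "a = a'" using rc(1)[OF a] rc(1)[OF a'] by simp
  qed
  also have "\<dots> = blue_weight V ends W Wh \<tau> b0 / Z * Zr
                      * (\<Sum>a\<in>Pow (Ered \<tau>). phi ends Wh (Gred \<tau>) a * Pm (Gred \<tau>) a br)"
    unfolding sum_distrib_left zB b0_def br_def
    by (intro sum.cong refl) (simp add: bond_flow[OF z[unfolded zB]] Zr(2) mult_ac)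
  also have "\<dots> = blue_weight V ends W Wh \<tau> b0 / Z * phi_w ends Wh (Gred \<tau>) br"
    by (simp only: stat Zr(2) mult.assoc)
  also have "\<dots> = m z"
    unfolding m_eq zB mu_w_split[OF graph sp(1,3)] b0_def br_def by simp
  finally show "(\<Sum>x\<in>S. ?f x) = m z" .
qed

lemma stationary_P: "stationary S P m"
  using stationary_matmul[OF stationary_P_colour stationary_P_bond] .


section \<open>Irreducibility\<close>

abbreviation reach where "reach \<equiv> {(a, b). a \<in> S \<and> b \<in> S \<and> P a b > 0}"
abbreviation supp_phi where "supp_phi \<equiv> {A \<in> Pow E. phi ends Wh (V, E) A > 0}"
abbreviation reach_G where "reach_G \<equiv> {(a, b). a \<in> supp_phi \<and> b \<in> supp_phi \<and> Pm (V, E) a b > 0}"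

lemma reach_step:
  assumes x: "(A, \<sigma>) \<in> S" and y: "(A, \<tau>) \<in> S" and z: "(B, \<tau>) \<in> S"
    and blue: "A \<inter> Eblue \<tau> = B \<inter> Eblue \<tau>"
    and red: "0 < Pm (Gred \<tau>) (A \<inter> Ered \<tau>) (B \<inter> Ered \<tau>)"
  shows "((A, \<sigma>), (B, \<tau>)) \<in> reach"
proof -
  have "0 < P_bond V E ends Pm (A, \<tau>) (B, \<tau>)"
    unfolding P_bond_eval using supp_props(3)[OF z] blue red by simp
  then have "0 < P (A, \<sigma>) (B, \<tau>)"
    using finite_supp y P_colour_pos[OF y] supp_props(1)[OF x]
    by (intro matmul_pos) (auto intro!: mult_nonneg_nonneg P_colour_nonneg P_bond_nonneg)
  then show ?thesis using x z by simp
qed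

lemma reach_all_red:
  assumes x: "(A, \<sigma>) \<in> S" and A': "A' \<in> supp_phi" and pm: "0 < Pm (V, E) A A'"
  shows "((A, \<sigma>), (A', all_red V)) \<in> reach"
proof (rule reach_step[OF x supp_all_red[OF x]])
  show z: "(A', all_red V) \<in> S" using A' by (rule iffD2[OF supp_all_red_iff[OF supp_props(4)[OF x]]])
  show "A \<inter> Eblue (all_red V) = A' \<inter> Eblue (all_red V)"
    by (simp add: col_edges_all_red[OF graph])
  show "0 < Pm (Gred (all_red V)) (A \<inter> Ered (all_red V)) (A' \<inter> Ered (all_red V))"
    using pm supp_props(1)[OF x] supp_props(1)[OF z]
    by (simp add: col_edges_all_red[OF graph] G_red_all_red[OF graph] Int_absorb2)
qed

lemma reach_all_red_layer:
  assumes "(A, A') \<in> reach_G\<^sup>*" and "0 < Z"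
  shows "((A, all_red V), (A', all_red V)) \<in> reach\<^sup>*"
proof (rule rtrancl_map[OF assms(1)])
  fix u v assume "(u, v) \<in> reach_G"
  then have "(u, all_red V) \<in> S" "v \<in> supp_phi" "0 < Pm (V, E) u v"
    using supp_all_red_iff[OF assms(2)] by auto
  then show "((u, all_red V), (v, all_red V)) \<in> reach" by (rule reach_all_red)
qed

text \<open>Any target state (B, tau) is entered by a bond move from a state (X, tau) with the same
  blue edges: since phi(B_red) > 0 and phi is stationary for the red chain, some red
  configuration of positive phi-weight moves to B_red.\<close>
lemma red_predecessor:
  assumes z: "(B, \<tau>) \<in> S"
  obtains X where "(X, \<tau>) \<in> S" "X \<inter> Eblue \<tau> = B \<inter> Eblue \<tau>"
    "0 < Pm (Gred \<tau>) (X \<inter> Ered \<tau>) (B \<inter> Ered \<tau>)"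
proof -
  note sp = supp_props[OF z]
  let ?phi = "phi ends Wh (Gred \<tau>)" and ?br = "B \<inter> Ered \<tau>"
  obtain Zr where Zr: "0 < Zr" "\<And>a. phi_w ends Wh (Gred \<tau>) a = Zr * ?phi a"
    using phi_red_scale[OF z] by blast
  have phi_nonneg: "0 \<le> ?phi a" if "a \<subseteq> Ered \<tau>" for a
    using phi_w_red_nonneg[OF that] Zr by (simp add: zero_le_mult_iff)
  have "0 < ?phi ?br" using supp_factors_pos(1)[OF z] Zr by (simp add: zero_less_mult_iff)
  also have "?phi ?br = (\<Sum>a\<in>Pow (Ered \<tau>). ?phi a * Pm (Gred \<tau>) a ?br)"
    using Pm_stat[OF z] unfolding stationary_def G_red_eq by auto
  finally obtain a where a: "a \<subseteq> Ered \<tau>" and pos: "0 < ?phi a * Pm (Gred \<tau>) a ?br"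
    by (meson PowD not_le sum_nonpos)
  then have "0 < ?phi a" "0 < Pm (Gred \<tau>) a ?br"
    using phi_nonneg[OF a] by (auto simp: zero_less_mult_iff)
  note rc = recombine[OF a, of "B \<inter> Eblue \<tau>"]
  show ?thesis
  proof
    show "(a \<union> B \<inter> Eblue \<tau>, \<tau>) \<in> S"
      using supp_of_factors_pos[OF a _ sp(2,4)] supp_factors_pos(2)[OF z] Zr \<open>0 < ?phi a\<close> by simp
  qed (use rc \<open>0 < Pm (Gred \<tau>) a ?br\<close> in auto)
qed

lemma irreducible_P: "irreducible_on S P"
  unfolding irreducible_on_def
proof (intro ballI)
  fix x z assume x: "x \<in> S" and z: "z \<in> S"
  obtain A \<sigma> B \<tau> where xA: "x = (A, \<sigma>)" and zB: "z = (B, \<tau>)" by (cases x, cases z)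
  obtain X where XS: "(X, \<tau>) \<in> S" and blue: "X \<inter> Eblue \<tau> = B \<inter> Eblue \<tau>"
    and red: "0 < Pm (Gred \<tau>) (X \<inter> Ered \<tau>) (B \<inter> Ered \<tau>)"
    using red_predecessor z zB by blast
  have final: "((X, \<rho>), (B, \<tau>)) \<in> reach" if "(X, \<rho>) \<in> S" for \<rho>
    using reach_step[OF that XS z[unfolded zB] blue red] .
  have Z: "0 < Z" using supp_props(4) XS by blast
  have "A \<in> supp_phi" "X \<in> supp_phi"
    using iffD1[OF supp_all_red_iff[OF Z]] supp_all_red x XS unfolding xA by blast+
  then have "(A, X) \<in> reach_G\<^sup>*"
    using Pm_erg unfolding irreducible_on_def by blast
  then show "(x, z) \<in> reach\<^sup>*"
  proof (cases rule: converse_rtranclE)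
    case base
    then show ?thesis using final x xA zB by auto
  next
    case (step Y)
    then have "(x, (Y, all_red V)) \<in> reach" using reach_all_red x xA by auto
    moreover have "((Y, all_red V), (X, all_red V)) \<in> reach\<^sup>*"
      using reach_all_red_layer step(2) Z by blast
    moreover have "((X, all_red V), z) \<in> reach" using final supp_all_red[OF XS] zB by auto
    ultimately show ?thesis by (meson converse_rtrancl_into_rtrancl rtrancl_into_rtrancl)
  qed
qed

end


theorem proposition3:
  fixes V :: "'v set" and E :: "'e set" and ends :: "'e \<Rightarrow> 'v set"
    and W Wh :: "'v set \<times> 'e set \<Rightarrow> real"
    and Pm :: "'v set \<times> 'e set \<Rightarrow> 'e set \<Rightarrow> 'e set \<Rightarrow> real"
  assumes graph: "finite_graph V E ends"
    and weights: "\<And>C. conn_subgraph V E ends C \<Longrightarrow>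
        W C \<ge> 0 \<and> Wh C \<ge> 0 \<and> (W C = 0 \<longrightarrow> Wh C = 0) \<and> (W C > 0 \<longrightarrow> 0 < Wh C \<and> Wh C < W C)"
    and Pm_trans: "\<And>\<sigma> A. (A, \<sigma>) \<in> supp_mu V E ends W Wh \<Longrightarrow>
        transition_matrix (Pow (snd (G_red V E ends \<sigma>))) (Pm (G_red V E ends \<sigma>))"
    and Pm_stat: "\<And>\<sigma> A. (A, \<sigma>) \<in> supp_mu V E ends W Wh \<Longrightarrow>
        stationary (Pow (snd (G_red V E ends \<sigma>))) (Pm (G_red V E ends \<sigma>))
                   (phi ends Wh (G_red V E ends \<sigma>))"
    and Pm_erg: "irreducible_on {A \<in> Pow E. phi ends Wh (V, E) A > 0} (Pm (V, E))"
  shows "irreducible_on (supp_mu V E ends W Wh)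
           (matmul (supp_mu V E ends W Wh) (P_colour V ends W Wh) (P_bond V E ends Pm))
       \<and> stationary (supp_mu V E ends W Wh)
           (matmul (supp_mu V E ends W Wh) (P_colour V ends W Wh) (P_bond V E ends Pm))
           (mu V E ends W Wh)"
proof -
  interpret bond_colour_chain V E ends W Wh Pm
    using graph weights Pm_trans Pm_stat Pm_erg by unfold_locales
  show ?thesis using irreducible_P stationary_P by blast
qed

end
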